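(* Let $n\ge1$ and let $\mathcal{LF}_2:S_n\to\mathbb{N}$ be the Lehmer factorial norm. Then: (i) $\mathcal{LF}_2(e_n)=0$ is the minimal value, and $e_n$ is the only permutation attaining it. (ii) $\mathcal{LF}_2(\bar e_n)=2^n-(n+1)$ is the maximal value, and $\bar e_n$ is the only permutation attaining it. (iii) For $s=1,\dots,n-1$, $\mathcal{LF}_2(\sigma_s)=2^{n-1-s}$; hence $\mathcal{LF}_2(\sigma_1)>\mathcal{LF}_2(\sigma_2)>\dots>\mathcal{LF}_2(\sigma_{n-1})$. (iv) The inclusion $\iota_n:S_n\to S_{n+1}$, $\iota_n(\sigma)=(1,\sigma(1)+1,\sigma(2)+1,\dots,\sigma(n)+1)$, satisfies $\mathcal{LF}_2(\iota_n(\sigma))=\mathcal{LF}_2(\sigma)$ for all $\sigma\in S_n$. (v) $\mathcal{LF}_2(\sigma)=\mathcal{LF}_2(\sigma^{-1})$ for all $\sigma\in S_n$. (vi) $\mathcal{LF}_2(\sigma\tau)\le\mathcal{LF}_2(\sigma)+\mathcal{LF}_2(\tau)$ for all $\sigma,\tau\in S_n$. (vii) For $\sigma\in S_n$, $s\in\{1,\dots,n-1\}$ and $\tau=\sigma\sigma_s$, $$|\mathcal{LF}_2(\tau)-\mathcal{LF}_2(\sigma)|=2^{-\min\{c_s(\sigma),c_{s+1}(\sigma)\}}\,\mathcal{LF}_2(\sigma_s).$$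
   Context: $[n]=\{1,\dots,n\}$, $S_n$ is the group of permutations of $[n]$, a permutation is written $\sigma=(\sigma(1),\dots,\sigma(n))$, composition is $(\sigma\tau)(i)=\sigma(\tau(i))$. $e_n=(1,2,\dots,n)$ is the identity and $\bar e_n=(n,n-1,\dots,1)$ its reverse. For $s=1,\dots,n-1$, $\sigma_s$ is the adjacent transposition swapping $s$ and $s+1$. For $\sigma\in S_n$ and $i\in[n]$, $c_i(\sigma)=|\{j\in[n]: j>i \text{ and } \sigma(j)<\sigma(i)\}|$ (Lehmer code entries), and $k_i(\sigma)=c_{n-i}(\sigma)$ for $i=0,\dots,n-1$. The Lehmer factorial norm (with base 2) is $\mathcal{LF}_2(\sigma)=\sum_{i=0}^{n-1}\left[2^i-2^{i-k_i(\sigma)}\right]$. *)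

theory Defs
  imports Complex_Main "HOL-Combinatorics.Combinatorics"
begin

text \<open>Permutations of [n] are functions nat => nat with sigma permutes {1..n}
  (fixed outside {1..n}). Composition is function composition.\<close>

definition lehmer_c :: "nat \<Rightarrow> (nat \<Rightarrow> nat) \<Rightarrow> nat \<Rightarrow> nat" where
  "lehmer_c n \<sigma> i = card {j \<in> {1..n}. j > i \<and> \<sigma> j < \<sigma> i}"

definition lehmer_k :: "nat \<Rightarrow> (nat \<Rightarrow> nat) \<Rightarrow> nat \<Rightarrow> nat" where
  "lehmer_k n \<sigma> i = lehmer_c n \<sigma> (n - i)"

text \<open>Lehmer factorial norm with base 2; note k_i <= i, so every summand is a
  nonnegative natural number and the natural-number subtractions are exact.\<close>
definition LF2 :: "nat \<Rightarrow> (nat \<Rightarrow> nat) \<Rightarrow> nat" where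
  "LF2 n \<sigma> = (\<Sum>i<n. 2 ^ i - 2 ^ (i - lehmer_k n \<sigma> i))"

definition rev_perm :: "nat \<Rightarrow> nat \<Rightarrow> nat" where
  "rev_perm n = (\<lambda>i. if i \<in> {1..n} then n + 1 - i else i)"

definition adj_transp :: "nat \<Rightarrow> nat \<Rightarrow> nat" where
  "adj_transp s = Transposition.transpose s (s + 1)"

definition iota_incl :: "nat \<Rightarrow> (nat \<Rightarrow> nat) \<Rightarrow> nat \<Rightarrow> nat" where
  "iota_incl n \<sigma> = (\<lambda>i. if i = 1 then 1 else if i \<in> {2..n+1} then \<sigma> (i - 1) + 1 else i)"

end

theory Submission
  imports Defs
begin

(* LF2 n \<sigma> counts the nonempty sets S \<subseteq> [n] on which \<sigma> does not carry the minimum to the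
   minimum, \<sigma> (min S) \<noteq> min (\<sigma> S): those with min S = p are p together with a subset of (p, n]
   meeting the c_p(\<sigma>) positions beyond p that \<sigma> sends below \<sigma> p, and there are
   2^(n-p) - 2^(n-p-c_p(\<sigma>)) of them.  In this form S \<mapsto> \<sigma> S turns violations of \<sigma> into
   violations of \<sigma>^-1, and a violation S of \<sigma>\<tau> is either one of \<tau> or \<tau> S is one of \<sigma>;
   this gives (v) and (vi).  Everything else is read off the sum over positions: the summand
   at p vanishes iff c_p = 0 and is maximal iff c_p = n - p, forcing \<sigma> to be increasing
   resp. decreasing, and right multiplication by \<sigma>_s at an ascent s leaves the codes outside
   {s, s+1} alone and turns (c_s, c_(s+1)) into (c_(s+1) + 1, c_s). *)

definition lehmer_set :: "nat \<Rightarrow> (nat \<Rightarrow> nat) \<Rightarrow> nat \<Rightarrow> nat set" where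
  "lehmer_set n \<sigma> p = {j \<in> {1..n}. j > p \<and> \<sigma> j < \<sigma> p}"

definition LF2_term :: "nat \<Rightarrow> (nat \<Rightarrow> nat) \<Rightarrow> nat \<Rightarrow> nat" where
  "LF2_term n \<sigma> p = 2 ^ (n - p) - 2 ^ (n - p - lehmer_c n \<sigma> p)"

definition min_violations :: "nat \<Rightarrow> (nat \<Rightarrow> nat) \<Rightarrow> nat set set" where
  "min_violations n \<sigma> = {S. S \<subseteq> {1..n} \<and> S \<noteq> {} \<and> \<sigma> (Min S) \<noteq> Min (\<sigma> ` S)}"

lemma lehmer_c_eq_card_lehmer_set: "lehmer_c n \<sigma> p = card (lehmer_set n \<sigma> p)"
  by (simp add: lehmer_c_def lehmer_set_def)

lemma lehmer_set_subset: "lehmer_set n \<sigma> p \<subseteq> {p<..n}"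
  by (auto simp: lehmer_set_def)

lemma lehmer_c_le: "lehmer_c n \<sigma> p \<le> n - p"
  using card_mono[OF _ lehmer_set_subset] by (simp add: lehmer_c_eq_card_lehmer_set)

lemma LF2_eq_sum_LF2_term: "LF2 n \<sigma> = (\<Sum>p\<in>{1..n}. LF2_term n \<sigma> p)"
  unfolding LF2_def lehmer_k_def LF2_term_def lessThan_atLeast0
  by (subst sum.atLeastLessThan_rev_at_least_Suc_atMost) simp

lemma Min_image_neq_iff:
  fixes f :: "'a \<Rightarrow> 'b::linorder"
  assumes "finite S" "x \<in> S"
  shows "f x \<noteq> Min (f ` S) \<longleftrightarrow> (\<exists>y\<in>S. f y < f x)"
proof -
  have "Min (f ` S) \<le> f x"
    using assms by simp
  then have "f x \<noteq> Min (f ` S) \<longleftrightarrow> Min (f ` S) < f x"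
    by auto
  also have "\<dots> \<longleftrightarrow> (\<exists>y\<in>S. f y < f x)"
    using assms by (subst Min_less_iff) auto
  finally show ?thesis .
qed

lemma card_subsets_meeting:
  assumes "finite X" "L \<subseteq> X"
  shows "card {T. T \<subseteq> X \<and> T \<inter> L \<noteq> {}} = 2 ^ card X - 2 ^ (card X - card L)"
proof -
  have "{T. T \<subseteq> X \<and> T \<inter> L \<noteq> {}} = Pow X - Pow (X - L)"
    by auto
  moreover have "card (Pow X - Pow (X - L)) = card (Pow X) - card (Pow (X - L))"
    using assms by (intro card_Diff_subset) auto
  ultimately show ?thesis
    using assms by (simp add: card_Pow card_Diff_subset finite_subset)
qed

lemma min_violations_with_Min:
  assumes "p \<in> {1..n}"
  shows "{S \<in> min_violations n \<sigma>. Min S = p}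
    = insert p ` {T. T \<subseteq> {p<..n} \<and> T \<inter> lehmer_set n \<sigma> p \<noteq> {}}"
proof (intro equalityI subsetI)
  fix S assume "S \<in> {S \<in> min_violations n \<sigma>. Min S = p}"
  then have S: "S \<in> min_violations n \<sigma>" and p: "p = Min S"
    by auto
  then have fin: "finite S" and Sn: "S \<subseteq> {1..n}" and "S \<noteq> {}"
    by (auto simp: min_violations_def intro: finite_subset)
  then have "p \<in> S" and above: "\<And>j. j \<in> S \<Longrightarrow> p \<le> j"
    using p by auto
  have "\<sigma> p \<noteq> Min (\<sigma> ` S)"
    using S p by (simp add: min_violations_def)
  then obtain j where j: "j \<in> S" "\<sigma> j < \<sigma> p"
    using Min_image_neq_iff[OF fin \<open>p \<in> S\<close>] by blast
  have "S - {p} \<subseteq> {p<..n}"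
  proof
    fix i assume "i \<in> S - {p}"
    then show "i \<in> {p<..n}"
      using Sn above[of i] by auto
  qed
  moreover have "j \<in> (S - {p}) \<inter> lehmer_set n \<sigma> p"
    using j Sn above[of j] by (auto simp: lehmer_set_def le_less)
  ultimately show "S \<in> insert p ` {T. T \<subseteq> {p<..n} \<and> T \<inter> lehmer_set n \<sigma> p \<noteq> {}}"
    using \<open>p \<in> S\<close> by (intro image_eqI[of _ _ "S - {p}"]) auto
next
  fix S assume "S \<in> insert p ` {T. T \<subseteq> {p<..n} \<and> T \<inter> lehmer_set n \<sigma> p \<noteq> {}}"
  then obtain T j where S: "S = insert p T" and T: "T \<subseteq> {p<..n}"
    and j: "j \<in> T" "j \<in> lehmer_set n \<sigma> p"
    by blast
  have fin: "finite (insert p T)"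
    using T finite_subset by blast
  have Min: "Min (insert p T) = p"
    using T fin by (intro Min_eqI) auto
  have "\<sigma> p \<noteq> Min (\<sigma> ` insert p T)"
    using j Min_image_neq_iff[OF fin, of p \<sigma>] by (auto simp: lehmer_set_def)
  then show "S \<in> {S \<in> min_violations n \<sigma>. Min S = p}"
    using S T assms Min by (auto simp: min_violations_def)
qed

lemma card_min_violations_with_Min:
  assumes "p \<in> {1..n}"
  shows "card {S \<in> min_violations n \<sigma>. Min S = p} = LF2_term n \<sigma> p"
proof -
  define A where "A = {T. T \<subseteq> {p<..n} \<and> T \<inter> lehmer_set n \<sigma> p \<noteq> {}}"
  have "inj_on (insert p) A"
  proof (rule inj_onI)
    fix T U assume "T \<in> A" "U \<in> A" "insert p T = insert p U"
    moreover from \<open>T \<in> A\<close> \<open>U \<in> A\<close> have "p \<notin> T" "p \<notin> U"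
      by (auto simp: A_def)
    ultimately show "T = U"
      by (simp add: insert_ident)
  qed
  then have "card (insert p ` A) = card A"
    by (rule card_image)
  also have "card A = 2 ^ (n - p) - 2 ^ (n - p - lehmer_c n \<sigma> p)"
    using card_subsets_meeting[OF finite_greaterThanAtMost lehmer_set_subset]
    by (simp add: A_def lehmer_c_eq_card_lehmer_set)
  finally show ?thesis
    by (simp add: min_violations_with_Min[OF assms] LF2_term_def A_def)
qed

lemma finite_min_violations: "finite (min_violations n \<sigma>)"
  by (rule finite_subset[of _ "Pow {1..n}"]) (auto simp: min_violations_def)

lemma LF2_eq_card_min_violations: "LF2 n \<sigma> = card (min_violations n \<sigma>)"
proof -
  have "card (min_violations n \<sigma>) = card (\<Union>p\<in>{1..n}. {S \<in> min_violations n \<sigma>. Min S = p})"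
  proof (rule arg_cong[where f = card], safe)
    fix S assume S: "S \<in> min_violations n \<sigma>"
    then have "Min S \<in> S" "S \<subseteq> {1..n}"
      by (auto simp: min_violations_def intro!: Min_in finite_subset[of S "{1..n}"])
    with S show "S \<in> (\<Union>p\<in>{1..n}. {S \<in> min_violations n \<sigma>. Min S = p})"
      by auto
  qed
  also have "\<dots> = (\<Sum>p\<in>{1..n}. card {S \<in> min_violations n \<sigma>. Min S = p})"
    by (rule card_UN_disjoint) (auto intro: finite_subset[OF _ finite_min_violations])
  also have "\<dots> = LF2 n \<sigma>"
    by (simp add: LF2_eq_sum_LF2_term card_min_violations_with_Min)
  finally show ?thesis
    by (rule sym)
qed

lemma image_in_min_violations_inv:
  assumes \<sigma>: "\<sigma> permutes {1..n}" and S: "S \<in> min_violations n \<sigma>"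
  shows "\<sigma> ` S \<in> min_violations n (inv \<sigma>)"
proof -
  have "inv \<sigma> ` \<sigma> ` S = S"
    using permutes_inj[OF \<sigma>] by (simp add: image_comp)
  moreover have "\<sigma> (Min S) \<noteq> Min (\<sigma> ` S)"
    using S by (simp add: min_violations_def)
  then have "inv \<sigma> (Min (\<sigma> ` S)) \<noteq> Min S"
    by (metis permutes_inverses(1)[OF \<sigma>])
  moreover have "\<sigma> ` S \<subseteq> {1..n}"
    using S permutes_image[OF \<sigma>] by (auto simp: min_violations_def)
  ultimately show ?thesis
    using S by (auto simp: min_violations_def)
qed

lemma LF2_le_LF2_inv:
  assumes "\<sigma> permutes {1..n}"
  shows "LF2 n \<sigma> \<le> LF2 n (inv \<sigma>)"
  unfolding LF2_eq_card_min_violations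
proof (rule card_inj_on_le[OF _ _ finite_min_violations])
  show "inj_on (image \<sigma>) (min_violations n \<sigma>)"
    using permutes_inj[OF assms] by (auto simp: inj_on_def inj_image_eq_iff)
  show "image \<sigma> ` min_violations n \<sigma> \<subseteq> min_violations n (inv \<sigma>)"
    using image_in_min_violations_inv[OF assms] by blast
qed

lemma LF2_inv:
  assumes "\<sigma> permutes {1..n}"
  shows "LF2 n (inv \<sigma>) = LF2 n \<sigma>"
  using LF2_le_LF2_inv[OF assms] LF2_le_LF2_inv[OF permutes_inv[OF assms]]
  by (simp add: permutes_inv_inv[OF assms])

lemma min_violations_comp_subset:
  assumes "\<tau> permutes {1..n}"
  shows "min_violations n (\<sigma> \<circ> \<tau>) \<subseteq> min_violations n \<tau> \<union> image (inv \<tau>) ` min_violations n \<sigma>"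
proof
  fix S assume S: "S \<in> min_violations n (\<sigma> \<circ> \<tau>)"
  show "S \<in> min_violations n \<tau> \<union> image (inv \<tau>) ` min_violations n \<sigma>"
  proof (cases "S \<in> min_violations n \<tau>")
    case False
    then have "\<tau> (Min S) = Min (\<tau> ` S)"
      using S by (auto simp: min_violations_def)
    moreover have "\<tau> ` S \<subseteq> {1..n}"
      using S permutes_image[OF assms] by (auto simp: min_violations_def)
    ultimately have "\<tau> ` S \<in> min_violations n \<sigma>"
      using S by (auto simp: min_violations_def image_comp)
    moreover have "inv \<tau> ` \<tau> ` S = S"
      using permutes_inj[OF assms] by (simp add: image_comp)
    ultimately show ?thesis
      by (metis UnI2 image_eqI)
  qed simp
qed

lemma LF2_comp_le:
  assumes "\<tau> permutes {1..n}"
  shows "LF2 n (\<sigma> \<circ> \<tau>) \<le> LF2 n \<sigma> + LF2 n \<tau>"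
proof -
  have "card (min_violations n (\<sigma> \<circ> \<tau>))
      \<le> card (min_violations n \<tau> \<union> image (inv \<tau>) ` min_violations n \<sigma>)"
    using min_violations_comp_subset[OF assms] by (rule card_mono[rotated]) (simp add: finite_min_violations)
  also have "\<dots> \<le> card (min_violations n \<tau>) + card (image (inv \<tau>) ` min_violations n \<sigma>)"
    by (rule card_Un_le)
  also have "card (image (inv \<tau>) ` min_violations n \<sigma>) \<le> card (min_violations n \<sigma>)"
    by (rule card_image_le[OF finite_min_violations])
  finally show ?thesis
    by (simp add: LF2_eq_card_min_violations)
qed

lemma LF2_id: "LF2 n id = 0"
  by (simp add: LF2_eq_card_min_violations min_violations_def)

lemma LF2_term_eq_0_iff: "LF2_term n \<sigma> p = 0 \<longleftrightarrow> lehmer_c n \<sigma> p = 0"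
proof -
  have "LF2_term n \<sigma> p = 0 \<longleftrightarrow> n - p \<le> n - p - lehmer_c n \<sigma> p"
    by (simp only: LF2_term_def diff_is_0_eq) simp
  then show ?thesis
    using lehmer_c_le[of n \<sigma> p] by linarith
qed

lemma LF2_term_le: "LF2_term n \<sigma> p \<le> 2 ^ (n - p) - 1"
  by (simp add: LF2_term_def diff_le_mono2)

lemma LF2_term_eq_max_iff: "LF2_term n \<sigma> p = 2 ^ (n - p) - 1 \<longleftrightarrow> lehmer_c n \<sigma> p = n - p"
proof -
  let ?c = "lehmer_c n \<sigma> p"
  have "1 \<le> (2::nat) ^ (n - p - ?c)" "(2::nat) ^ (n - p - ?c) \<le> 2 ^ (n - p)"
    by (simp_all add: power_increasing)
  then have "LF2_term n \<sigma> p = 2 ^ (n - p) - 1 \<longleftrightarrow> (2::nat) ^ (n - p - ?c) = 1"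
    unfolding LF2_term_def by linarith
  also have "\<dots> \<longleftrightarrow> ?c = n - p"
    using lehmer_c_le[of n \<sigma> p] by auto
  finally show ?thesis .
qed

lemma LF2_eq_0_iff: "LF2 n \<sigma> = 0 \<longleftrightarrow> (\<forall>p\<in>{1..n}. lehmer_c n \<sigma> p = 0)"
  by (simp add: LF2_eq_sum_LF2_term LF2_term_eq_0_iff)

lemma sum_pow2_minus_1: "(\<Sum>p\<in>{1..n}. 2 ^ (n - p) - 1 :: nat) = 2 ^ n - (n + 1)"
proof -
  have "(\<Sum>p\<in>{1..n}. 2 ^ (n - p) - 1 :: nat) = (\<Sum>i<n. 2 ^ i - 1)"
    unfolding lessThan_atLeast0 by (subst sum.atLeastLessThan_rev_at_least_Suc_atMost) simp
  also have "\<dots> = (\<Sum>i<n. 2 ^ i) - n"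
    by (subst sum_subtractf_nat) auto
  finally show ?thesis
    by (simp add: lessThan_atLeast0 sum_power2)
qed

lemma LF2_le_max: "LF2 n \<sigma> \<le> 2 ^ n - (n + 1)"
  unfolding LF2_eq_sum_LF2_term sum_pow2_minus_1[symmetric] by (rule sum_mono) (rule LF2_term_le)

lemma LF2_eq_max_iff: "LF2 n \<sigma> = 2 ^ n - (n + 1) \<longleftrightarrow> (\<forall>p\<in>{1..n}. lehmer_c n \<sigma> p = n - p)"
proof
  assume "LF2 n \<sigma> = 2 ^ n - (n + 1)"
  then have sum_eq: "(\<Sum>p\<in>{1..n}. LF2_term n \<sigma> p) = (\<Sum>p\<in>{1..n}. 2 ^ (n - p) - 1)"
    by (simp only: LF2_eq_sum_LF2_term sum_pow2_minus_1)
  have "LF2_term n \<sigma> p = 2 ^ (n - p) - 1" if "p \<in> {1..n}" for p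
    using that by (intro sum_mono_inv[OF sum_eq] LF2_term_le) auto
  then show "\<forall>p\<in>{1..n}. lehmer_c n \<sigma> p = n - p"
    using LF2_term_eq_max_iff by blast
next
  assume "\<forall>p\<in>{1..n}. lehmer_c n \<sigma> p = n - p"
  then have "LF2 n \<sigma> = (\<Sum>p\<in>{1..n}. 2 ^ (n - p) - 1)"
    unfolding LF2_eq_sum_LF2_term by (intro sum.cong refl) (use LF2_term_eq_max_iff in blast)
  then show "LF2 n \<sigma> = 2 ^ n - (n + 1)"
    by (simp only: sum_pow2_minus_1)
qed

lemma lehmer_c_rev_perm:
  assumes "p \<in> {1..n}"
  shows "lehmer_c n (rev_perm n) p = n - p"
proof -
  have "lehmer_set n (rev_perm n) p = {p<..n}"
    using assms by (auto simp: lehmer_set_def rev_perm_def)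
  then show ?thesis
    by (simp add: lehmer_c_eq_card_lehmer_set)
qed

lemma LF2_rev_perm: "LF2 n (rev_perm n) = 2 ^ n - (n + 1)"
  unfolding LF2_eq_max_iff using lehmer_c_rev_perm by blast

lemma strict_antimono_on_less:
  fixes f :: "'a::linorder \<Rightarrow> 'b::linorder"
  assumes "strict_antimono_on S f" "x \<in> S" "y \<in> S"
  shows "f x < f y \<longleftrightarrow> y < x"
  using monotone_onD[OF assms(1) assms(2,3)] monotone_onD[OF assms(1) assms(3,2)]
  by (cases x y rule: linorder_cases) auto

lemma permutes_apply_eq_card_less:
  assumes \<sigma>: "\<sigma> permutes {1..n}" and i: "i \<in> {1..n}"
  shows "\<sigma> i = Suc (card {j \<in> {1..n}. \<sigma> j < \<sigma> i})"
proof -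
  have "\<sigma> ` {j \<in> {1..n}. \<sigma> j < \<sigma> i} = {v \<in> \<sigma> ` {1..n}. v < \<sigma> i}"
    by auto
  also have "\<dots> = {1..<\<sigma> i}"
    using permutes_image[OF \<sigma>] permutes_in_image[OF \<sigma>, of i] i by auto
  finally have "\<sigma> ` {j \<in> {1..n}. \<sigma> j < \<sigma> i} = {1..<\<sigma> i}" .
  moreover have "card (\<sigma> ` {j \<in> {1..n}. \<sigma> j < \<sigma> i}) = card {j \<in> {1..n}. \<sigma> j < \<sigma> i}"
    by (rule card_image[OF inj_on_subset[OF permutes_inj[OF \<sigma>] subset_UNIV]])
  ultimately have "card {j \<in> {1..n}. \<sigma> j < \<sigma> i} = \<sigma> i - 1"
    by simp
  moreover have "\<sigma> i \<ge> 1"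
    using permutes_in_image[OF \<sigma>] i by auto
  ultimately show ?thesis
    by simp
qed

lemma permutes_strict_mono_on_eq_id:
  fixes \<sigma> :: "nat \<Rightarrow> nat"
  assumes \<sigma>: "\<sigma> permutes {1..n}" and mono: "strict_mono_on {1..n} \<sigma>"
  shows "\<sigma> = id"
proof
  fix i show "\<sigma> i = id i"
  proof (cases "i \<in> {1..n}")
    case True
    have "\<sigma> j < \<sigma> i \<longleftrightarrow> j < i" if "j \<in> {1..n}" for j
      using strict_mono_on_less[OF mono that True] .
    then have "{j \<in> {1..n}. \<sigma> j < \<sigma> i} = {1..<i}"
      using True by auto
    then show ?thesis
      using permutes_apply_eq_card_less[OF \<sigma> True] True by simp
  qed (simp add: permutes_not_in[OF \<sigma>])
qed

lemma permutes_strict_antimono_on_eq_rev_perm: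
  assumes \<sigma>: "\<sigma> permutes {1..n}" and anti: "strict_antimono_on {1..n} \<sigma>"
  shows "\<sigma> = rev_perm n"
proof
  fix i show "\<sigma> i = rev_perm n i"
  proof (cases "i \<in> {1..n}")
    case True
    have "\<sigma> j < \<sigma> i \<longleftrightarrow> i < j" if "j \<in> {1..n}" for j
      using strict_antimono_on_less[OF anti that True] .
    then have "{j \<in> {1..n}. \<sigma> j < \<sigma> i} = {i<..n}"
      by auto
    then show ?thesis
      using permutes_apply_eq_card_less[OF \<sigma> True] True by (simp add: rev_perm_def Suc_diff_le)
  qed (auto simp: permutes_not_in[OF \<sigma>] rev_perm_def)
qed

lemma strict_mono_on_if_lehmer_c_eq_0:
  assumes \<sigma>: "\<sigma> permutes {1..n}" and c: "\<forall>p\<in>{1..n}. lehmer_c n \<sigma> p = 0"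
  shows "strict_mono_on {1..n} \<sigma>"
proof (rule monotone_onI)
  fix i j assume ij: "i \<in> {1..n}" "j \<in> {1..n}" "i < j"
  have "lehmer_set n \<sigma> i = {}"
    using c ij(1) finite_subset[OF lehmer_set_subset] by (simp add: lehmer_c_eq_card_lehmer_set)
  then have "\<not> \<sigma> j < \<sigma> i"
    using ij by (auto simp: lehmer_set_def)
  moreover have "\<sigma> i \<noteq> \<sigma> j"
    using inj_eq[OF permutes_inj[OF \<sigma>]] ij(3) by simp
  ultimately show "\<sigma> i < \<sigma> j"
    by simp
qed

lemma strict_antimono_on_if_lehmer_c_eq_max:
  assumes c: "\<forall>p\<in>{1..n}. lehmer_c n \<sigma> p = n - p"
  shows "strict_antimono_on {1..n} \<sigma>"
proof (rule monotone_onI)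
  fix i j assume ij: "i \<in> {1..n}" "j \<in> {1..n}" "i < j"
  have "card (lehmer_set n \<sigma> i) = card {i<..n}"
    using c ij(1) by (simp add: lehmer_c_eq_card_lehmer_set)
  then have "lehmer_set n \<sigma> i = {i<..n}"
    by (rule card_subset_eq[OF finite_greaterThanAtMost lehmer_set_subset])
  then have "j \<in> lehmer_set n \<sigma> i"
    using ij by simp
  then show "\<sigma> j < \<sigma> i"
    by (simp add: lehmer_set_def)
qed

lemma LF2_eq_0_imp_id:
  assumes "\<sigma> permutes {1..n}" "LF2 n \<sigma> = 0"
  shows "\<sigma> = id"
  using assms LF2_eq_0_iff strict_mono_on_if_lehmer_c_eq_0 permutes_strict_mono_on_eq_id by blast

lemma LF2_eq_max_imp_rev_perm:
  assumes "\<sigma> permutes {1..n}" "LF2 n \<sigma> = 2 ^ n - (n + 1)"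
  shows "\<sigma> = rev_perm n"
  using assms LF2_eq_max_iff strict_antimono_on_if_lehmer_c_eq_max permutes_strict_antimono_on_eq_rev_perm
  by blast

lemma lehmer_c_adj_transp:
  assumes "s \<in> {1..n-1}"
  shows "lehmer_c n (adj_transp s) p = (if p = s then 1 else 0)"
proof -
  have "lehmer_set n (adj_transp s) p = (if p = s then {s + 1} else {})"
    using assms by (auto simp: lehmer_set_def adj_transp_def transpose_def)
  then show ?thesis
    by (simp add: lehmer_c_eq_card_lehmer_set)
qed

lemma LF2_adj_transp:
  assumes s: "s \<in> {1..n-1}"
  shows "LF2 n (adj_transp s) = 2 ^ (n - 1 - s)"
proof -
  have "LF2 n (adj_transp s) = (\<Sum>p\<in>{1..n}. if p = s then LF2_term n (adj_transp s) s else 0)"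
    unfolding LF2_eq_sum_LF2_term
    by (rule sum.cong) (simp_all add: LF2_term_eq_0_iff lehmer_c_adj_transp[OF s])
  also have "\<dots> = LF2_term n (adj_transp s) s"
    using s by auto
  also have "\<dots> = 2 ^ (n - 1 - s)"
  proof -
    have "n - s = Suc (n - 1 - s)"
      using s by auto
    then show ?thesis
      by (simp only: LF2_term_def lehmer_c_adj_transp[OF s] if_True) simp
  qed
  finally show ?thesis .
qed

lemma LF2_adj_transp_less:
  assumes "1 \<le> s" "s < t" "t \<le> n - 1"
  shows "LF2 n (adj_transp t) < LF2 n (adj_transp s)"
  using assms by (simp add: LF2_adj_transp power_strict_increasing_iff diff_less_mono2)

lemma lehmer_c_iota_incl_1: "lehmer_c (n + 1) (iota_incl n \<sigma>) 1 = 0"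
  by (simp add: lehmer_c_def iota_incl_def)

lemma lehmer_c_iota_incl_Suc:
  assumes q: "q \<in> {1..n}"
  shows "lehmer_c (Suc n) (iota_incl n \<sigma>) (Suc q) = lehmer_c n \<sigma> q"
proof -
  have "lehmer_set (Suc n) (iota_incl n \<sigma>) (Suc q) = Suc ` lehmer_set n \<sigma> q"
  proof (intro equalityI subsetI)
    fix x assume "x \<in> lehmer_set (Suc n) (iota_incl n \<sigma>) (Suc q)"
    then have "x - 1 \<in> lehmer_set n \<sigma> q" "x = Suc (x - 1)"
      using q by (auto simp: lehmer_set_def iota_incl_def split: if_splits)
    then show "x \<in> Suc ` lehmer_set n \<sigma> q"
      by (metis image_eqI)
  next
    fix x assume "x \<in> Suc ` lehmer_set n \<sigma> q"
    then show "x \<in> lehmer_set (Suc n) (iota_incl n \<sigma>) (Suc q)"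
      using q by (auto simp: lehmer_set_def iota_incl_def)
  qed
  then show ?thesis
    by (simp add: lehmer_c_eq_card_lehmer_set card_image)
qed

lemma LF2_iota_incl: "LF2 (n + 1) (iota_incl n \<sigma>) = LF2 n \<sigma>"
proof -
  have "LF2 (n + 1) (iota_incl n \<sigma>) = (\<Sum>p\<in>{1..Suc n}. LF2_term (n + 1) (iota_incl n \<sigma>) p)"
    by (simp add: LF2_eq_sum_LF2_term)
  also have "\<dots> = LF2_term (n + 1) (iota_incl n \<sigma>) 1
      + (\<Sum>p\<in>{Suc 1..Suc n}. LF2_term (n + 1) (iota_incl n \<sigma>) p)"
    by (rule sum.atLeast_Suc_atMost) simp
  also have "(\<Sum>p\<in>{Suc 1..Suc n}. LF2_term (n + 1) (iota_incl n \<sigma>) p)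
      = (\<Sum>q\<in>{1..n}. LF2_term (n + 1) (iota_incl n \<sigma>) (Suc q))"
    by (rule sum.shift_bounds_cl_Suc_ivl)
  also have "LF2_term (n + 1) (iota_incl n \<sigma>) 1 = 0"
    unfolding LF2_term_eq_0_iff by (rule lehmer_c_iota_incl_1)
  also have "(\<Sum>q\<in>{1..n}. LF2_term (n + 1) (iota_incl n \<sigma>) (Suc q)) = LF2 n \<sigma>"
    unfolding LF2_eq_sum_LF2_term
    by (rule sum.cong) (simp_all add: LF2_term_def lehmer_c_iota_incl_Suc)
  finally show ?thesis
    by simp
qed

lemma lehmer_c_comp_adj_transp_other:
  assumes s: "s \<in> {1..n-1}" and p: "p \<noteq> s" "p \<noteq> s + 1"
  shows "lehmer_c n (\<sigma> \<circ> adj_transp s) p = lehmer_c n \<sigma> p"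
proof -
  have tp: "adj_transp s p = p"
    using p by (simp add: adj_transp_def)
  have "j \<in> lehmer_set n (\<sigma> \<circ> adj_transp s) p \<longleftrightarrow> adj_transp s j \<in> lehmer_set n \<sigma> p" for j
    using s p by (cases "j = s \<or> j = s + 1") (auto simp: lehmer_set_def adj_transp_def tp)
  then have "bij_betw (adj_transp s) (lehmer_set n (\<sigma> \<circ> adj_transp s) p) (lehmer_set n \<sigma> p)"
    by (intro bij_betw_byWitness[where f' = "adj_transp s"]) (auto simp: adj_transp_def)
  then show ?thesis
    by (simp add: lehmer_c_eq_card_lehmer_set bij_betw_same_card)
qed

lemma lehmer_c_le_if_ascent:
  assumes "\<sigma> s < \<sigma> (s + 1)"
  shows "lehmer_c n \<sigma> s \<le> lehmer_c n \<sigma> (s + 1)"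
proof -
  have "lehmer_set n \<sigma> s \<subseteq> lehmer_set n \<sigma> (s + 1)"
  proof
    fix j assume "j \<in> lehmer_set n \<sigma> s"
    then have j: "j \<in> {1..n}" "s < j" "\<sigma> j < \<sigma> s"
      by (simp_all add: lehmer_set_def)
    then have "j \<noteq> s + 1"
      using assms by auto
    with j assms show "j \<in> lehmer_set n \<sigma> (s + 1)"
      by (auto simp: lehmer_set_def)
  qed
  then show ?thesis
    unfolding lehmer_c_eq_card_lehmer_set by (rule card_mono[OF finite_subset[OF lehmer_set_subset], rotated]) simp
qed

lemma lehmer_c_comp_adj_transp_ascent:
  assumes "\<sigma> s < \<sigma> (s + 1)" "s + 1 \<le> n"
  shows "lehmer_c n (\<sigma> \<circ> adj_transp s) s = Suc (lehmer_c n \<sigma> (s + 1))"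
proof -
  have "lehmer_set n (\<sigma> \<circ> adj_transp s) s = insert (s + 1) (lehmer_set n \<sigma> (s + 1))"
    using assms by (auto simp: lehmer_set_def adj_transp_def transpose_def)
  moreover have "s + 1 \<notin> lehmer_set n \<sigma> (s + 1)"
    by (simp add: lehmer_set_def)
  ultimately show ?thesis
    by (simp add: lehmer_c_eq_card_lehmer_set finite_subset[OF lehmer_set_subset])
qed

lemma lehmer_c_Suc_comp_adj_transp_ascent:
  assumes "\<sigma> s < \<sigma> (s + 1)"
  shows "lehmer_c n (\<sigma> \<circ> adj_transp s) (s + 1) = lehmer_c n \<sigma> s"
proof -
  have "lehmer_set n (\<sigma> \<circ> adj_transp s) (s + 1) = lehmer_set n \<sigma> s"
    using assms by (auto simp: lehmer_set_def adj_transp_def transpose_def Suc_le_eq le_less)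
  then show ?thesis
    by (simp add: lehmer_c_eq_card_lehmer_set)
qed

lemma LF2_comp_adj_transp_ascent:
  assumes s: "s \<in> {1..n-1}" and asc: "\<sigma> s < \<sigma> (s + 1)"
  shows "LF2 n (\<sigma> \<circ> adj_transp s) = LF2 n \<sigma> + 2 ^ (n - 1 - s - lehmer_c n \<sigma> s)"
proof -
  define \<tau> where "\<tau> = \<sigma> \<circ> adj_transp s"
  define m where "m = n - 1 - s"
  define A where "A = lehmer_c n \<sigma> s"
  define B where "B = lehmer_c n \<sigma> (s + 1)"
  have m: "n - s = Suc m" "n - (s + 1) = m"
    using s by (auto simp: m_def)
  have "A \<le> B" "B \<le> m"
    using lehmer_c_le_if_ascent[where n = n, OF asc] lehmer_c_le[of n \<sigma> "s + 1"]
    by (simp_all add: A_def B_def m_def)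
  then have pow: "(2::nat) ^ (Suc m - A) = 2 * 2 ^ (m - A)" "(2::nat) ^ (m - B) \<le> 2 ^ (m - A)"
    "(2::nat) ^ (m - A) \<le> 2 ^ m"
    by (simp_all add: Suc_diff_le)
  have c\<tau>: "lehmer_c n \<tau> s = Suc B" "lehmer_c n \<tau> (s + 1) = A"
    using s lehmer_c_comp_adj_transp_ascent[OF asc] lehmer_c_Suc_comp_adj_transp_ascent[OF asc]
    by (auto simp: \<tau>_def A_def B_def)
  have swapped_terms: "LF2_term n \<tau> s + LF2_term n \<tau> (s + 1) = LF2_term n \<sigma> s + LF2_term n \<sigma> (s + 1) + 2 ^ (m - A)"
    unfolding LF2_term_def c\<tau> m A_def[symmetric] B_def[symmetric] diff_Suc_Suc power_Suc pow(1)
    using pow(2,3) by linarith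
  have split: "(\<Sum>p\<in>{1..n}. f p) = (\<Sum>p\<in>{1..n} - {s, s + 1}. f p) + (f s + f (s + 1))"
    for f :: "nat \<Rightarrow> nat"
  proof -
    have "(\<Sum>p\<in>{1..n}. f p) = (\<Sum>p\<in>{1..n} - {s, s + 1}. f p) + (\<Sum>p\<in>{s, s + 1}. f p)"
      using s by (intro sum.subset_diff) auto
    then show ?thesis
      by simp
  qed
  have "(\<Sum>p\<in>{1..n} - {s, s + 1}. LF2_term n \<tau> p) = (\<Sum>p\<in>{1..n} - {s, s + 1}. LF2_term n \<sigma> p)"
    using s by (intro sum.cong) (auto simp: LF2_term_def \<tau>_def lehmer_c_comp_adj_transp_other)
  then show ?thesis
    unfolding \<tau>_def[symmetric] LF2_eq_sum_LF2_term split[of "LF2_term n \<tau>"] split[of "LF2_term n \<sigma>"] swapped_terms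
    by (simp add: m_def A_def)
qed

lemma LF2_comp_adj_transp_dist:
  assumes \<sigma>: "\<sigma> permutes {1..n}" and s: "s \<in> {1..n-1}"
  shows "\<bar>real (LF2 n (\<sigma> \<circ> adj_transp s)) - real (LF2 n \<sigma>)\<bar>
    = real (LF2 n (adj_transp s)) / 2 ^ min (lehmer_c n \<sigma> s) (lehmer_c n \<sigma> (s + 1))"
proof -
  define \<tau> where "\<tau> = \<sigma> \<circ> adj_transp s"
  define k where "k = min (lehmer_c n \<sigma> s) (lehmer_c n \<sigma> (s + 1))"
  have "k \<le> n - 1 - s"
    using lehmer_c_le[of n \<sigma> "s + 1"] by (simp add: k_def)
  have "\<bar>real (LF2 n \<tau>) - real (LF2 n \<sigma>)\<bar> = 2 ^ (n - 1 - s - k)"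
  proof (cases "\<sigma> s < \<sigma> (s + 1)")
    case True
    then show ?thesis
      using LF2_comp_adj_transp_ascent[OF s True] lehmer_c_le_if_ascent[where n = n, OF True]
      by (simp add: \<tau>_def k_def)
  next
    case False
    then have asc: "\<tau> s < \<tau> (s + 1)"
      using inj_eq[OF permutes_inj[OF \<sigma>], of s "s + 1"]
      by (simp add: \<tau>_def adj_transp_def)
    have \<sigma>_eq: "\<sigma> = \<tau> \<circ> adj_transp s"
      by (simp add: \<tau>_def adj_transp_def fun_eq_iff)
    have "lehmer_c n \<sigma> (s + 1) = lehmer_c n \<tau> s" "lehmer_c n \<sigma> s = Suc (lehmer_c n \<tau> (s + 1))"
      using s lehmer_c_Suc_comp_adj_transp_ascent[OF asc] lehmer_c_comp_adj_transp_ascent[OF asc]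
      by (auto simp flip: \<sigma>_eq)
    then have "k = lehmer_c n \<tau> s"
      using lehmer_c_le_if_ascent[where n = n, OF asc] by (auto simp: k_def min_def)
    then show ?thesis
      using LF2_comp_adj_transp_ascent[OF s asc] by (simp flip: \<sigma>_eq)
  qed
  also have "\<dots> = 2 ^ (n - 1 - s) / 2 ^ k"
    using \<open>k \<le> n - 1 - s\<close> by (intro power_diff) simp_all
  also have "\<dots> = real (LF2 n (adj_transp s)) / 2 ^ k"
    by (simp add: LF2_adj_transp[OF s])
  finally show ?thesis
    by (simp add: \<tau>_def k_def)
qed

theorem theorem3p6:
  fixes n :: nat
  assumes "n \<ge> 1"
  shows
   "(LF2 n id = 0 \<and> (\<forall>\<sigma>. \<sigma> permutes {1..n} \<longrightarrow> LF2 n id \<le> LF2 n \<sigma>)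
       \<and> (\<forall>\<sigma>. \<sigma> permutes {1..n} \<and> LF2 n \<sigma> = 0 \<longrightarrow> \<sigma> = id))
    \<and> (LF2 n (rev_perm n) = 2 ^ n - (n + 1)
       \<and> (\<forall>\<sigma>. \<sigma> permutes {1..n} \<longrightarrow> LF2 n \<sigma> \<le> LF2 n (rev_perm n))
       \<and> (\<forall>\<sigma>. \<sigma> permutes {1..n} \<and> LF2 n \<sigma> = 2 ^ n - (n + 1) \<longrightarrow> \<sigma> = rev_perm n))
    \<and> ((\<forall>s\<in>{1..n-1}. LF2 n (adj_transp s) = 2 ^ (n - 1 - s))
       \<and> (\<forall>s t. 1 \<le> s \<and> s < t \<and> t \<le> n - 1 \<longrightarrow> LF2 n (adj_transp s) > LF2 n (adj_transp t)))
    \<and> (\<forall>\<sigma>. \<sigma> permutes {1..n} \<longrightarrow> LF2 (n + 1) (iota_incl n \<sigma>) = LF2 n \<sigma>)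
    \<and> (\<forall>\<sigma>. \<sigma> permutes {1..n} \<longrightarrow> LF2 n \<sigma> = LF2 n (inv \<sigma>))
    \<and> (\<forall>\<sigma> \<tau>. \<sigma> permutes {1..n} \<and> \<tau> permutes {1..n} \<longrightarrow>
         LF2 n (\<sigma> \<circ> \<tau>) \<le> LF2 n \<sigma> + LF2 n \<tau>)
    \<and> (\<forall>\<sigma> s. \<sigma> permutes {1..n} \<and> s \<in> {1..n-1} \<longrightarrow>
         \<bar>real (LF2 n (\<sigma> \<circ> adj_transp s)) - real (LF2 n \<sigma>)\<bar>
           = real (LF2 n (adj_transp s)) / 2 ^ min (lehmer_c n \<sigma> s) (lehmer_c n \<sigma> (s + 1)))"
proof (intro conjI allI impI ballI)
  show "LF2 n id = 0" "LF2 n id \<le> LF2 n \<sigma>" for \<sigma>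
    by (simp_all add: LF2_id)
  show "\<sigma> = id" if "\<sigma> permutes {1..n} \<and> LF2 n \<sigma> = 0" for \<sigma>
    using that LF2_eq_0_imp_id by blast
  show "LF2 n (rev_perm n) = 2 ^ n - (n + 1)"
    by (rule LF2_rev_perm)
  show "LF2 n \<sigma> \<le> LF2 n (rev_perm n)" for \<sigma>
    unfolding LF2_rev_perm by (rule LF2_le_max)
  show "\<sigma> = rev_perm n" if "\<sigma> permutes {1..n} \<and> LF2 n \<sigma> = 2 ^ n - (n + 1)" for \<sigma>
    using that LF2_eq_max_imp_rev_perm by blast
  show "LF2 n (adj_transp s) = 2 ^ (n - 1 - s)" if "s \<in> {1..n-1}" for s
    using that by (rule LF2_adj_transp)
  show "LF2 n (adj_transp s) > LF2 n (adj_transp t)" if "1 \<le> s \<and> s < t \<and> t \<le> n - 1" for s t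
    using that by (intro LF2_adj_transp_less) auto
  show "LF2 (n + 1) (iota_incl n \<sigma>) = LF2 n \<sigma>" for \<sigma>
    by (rule LF2_iota_incl)
  show "LF2 n \<sigma> = LF2 n (inv \<sigma>)" if "\<sigma> permutes {1..n}" for \<sigma>
    using LF2_inv[OF that] by simp
  show "LF2 n (\<sigma> \<circ> \<tau>) \<le> LF2 n \<sigma> + LF2 n \<tau>" if "\<sigma> permutes {1..n} \<and> \<tau> permutes {1..n}" for \<sigma> \<tau>
    using that LF2_comp_le by blast
  show "\<bar>real (LF2 n (\<sigma> \<circ> adj_transp s)) - real (LF2 n \<sigma>)\<bar>
      = real (LF2 n (adj_transp s)) / 2 ^ min (lehmer_c n \<sigma> s) (lehmer_c n \<sigma> (s + 1))"
    if "\<sigma> permutes {1..n} \<and> s \<in> {1..n-1}" for \<sigma> s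
    using that LF2_comp_adj_transp_dist by blast
qed

end
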